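(* Let $0<\mu<L$ and let $m(z)=z^n+\sum_{i=0}^{n-1}m_iz^i\in\mathbb{R}[z]$ be monic of degree $n$ with all roots on the unit circle. Consider optimization filters of the form $C(z)=c(z)I_d$ with $c(z)=d(z)/m(z)$, $d(z)\in\mathbb{R}[z]$, $\deg d<n$. For such a filter and a symmetric $A$ with eigenvalues $\lambda_1,\dots,\lambda_d\in[\mu,L]$, the closed-loop poles of the algorithm (i.e., the poles of the transfer functions from $B(z)$ to the iterates in the eigenbasis of $A$) are the roots of the polynomials $m(z)-\lambda_i d(z)$, $i=1,\dots,d$. Consequently, the optimal worst-case convergence rate achievable by any such minimal-order algorithm, over all $A$ with eigenvalues in $[\mu,L]$, equals $$\rho=\min_{d(z)\in\mathbb{R}[z],\ \deg d<n}\ \max_{\lambda\in[\mu,L]}\ \max\{|z| : m(z)-\lambda d(z)=0\}.$$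
   Context: Time-varying objective: $f_k(x)=\tfrac12 x^\top A x+b_k^\top x$ with $A\in\mathbb{R}^{d\times d}$ symmetric, eigenvalues in $[\mu,L]$, and $\{b_k\}$ having $\mathcal{Z}$-transform $B(z)=B_N(z)/m(z)$, $B_N\in\mathbb{R}^d[z]$. The algorithm generates iterates $x_k$ (zero initial internal state) whose $\mathcal{Z}$-transform satisfies $X(z)=C(z)(AX(z)+B(z))$. The convergence rate (root-convergence factor) is $\limsup_{k\to\infty}\|x_k-x_k^\star\|^{1/k}$ where $x_k^\star=-A^{-1}b_k$, and for an LTI system it is identified with the maximum modulus of the poles of its transfer function. *)

theory Defs
  imports "Jordan_Normal_Form.Char_Poly"
begin

definition cpoly :: "real poly \<Rightarrow> complex poly" where
  "cpoly p = map_poly complex_of_real p"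

definition sym_spec :: "nat \<Rightarrow> real \<Rightarrow> real \<Rightarrow> real mat \<Rightarrow> bool" where
  "sym_spec ndim mu L A \<longleftrightarrow> A \<in> carrier_mat ndim ndim \<and> A\<^sup>T = A \<and>
     (\<forall>k. eigenvalue (map_mat complex_of_real A) k \<longrightarrow> k \<in> complex_of_real ` {mu..L})"

text \<open>Closed-loop characteristic polynomial of the algorithm X = C (A X + B) with
  C(z) = (dp(z)/m(z)) I: the denominator of the closed-loop transfer function
  (I - C(z) A)^{-1} C(z) = dp(z) (m(z) I - dp(z) A)^{-1}, i.e. det (m(z) I - dp(z) A).\<close>
definition closed_loop_charpoly :: "real poly \<Rightarrow> real poly \<Rightarrow> real mat \<Rightarrow> complex poly" where
  "closed_loop_charpoly m dp A =
     det (mat (dim_row A) (dim_row A)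
       (\<lambda>(i,j). (if i = j then cpoly m else 0) - Polynomial.smult (complex_of_real (A $$ (i,j))) (cpoly dp)))"

definition closed_loop_poles :: "real poly \<Rightarrow> real poly \<Rightarrow> real mat \<Rightarrow> complex set" where
  "closed_loop_poles m dp A = {z. poly (closed_loop_charpoly m dp A) z = 0}"

definition alg_rate :: "real poly \<Rightarrow> real poly \<Rightarrow> real mat \<Rightarrow> real" where
  "alg_rate m dp A = Max (norm ` closed_loop_poles m dp A)"

definition worst_rate :: "nat \<Rightarrow> real \<Rightarrow> real \<Rightarrow> real poly \<Rightarrow> real poly \<Rightarrow> real" where
  "worst_rate ndim mu L m dp = (SUP A\<in>{A. sym_spec ndim mu L A}. alg_rate m dp A)"

definition optimal_rate :: "nat \<Rightarrow> real \<Rightarrow> real \<Rightarrow> real poly \<Rightarrow> real" where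
  "optimal_rate ndim mu L m = (INF dp\<in>{dp. degree dp < degree m}. worst_rate ndim mu L m dp)"

definition root_set :: "real poly \<Rightarrow> real poly \<Rightarrow> real \<Rightarrow> complex set" where
  "root_set m dp lam = {z. poly (cpoly (m - Polynomial.smult lam dp)) z = 0}"

definition max_root_mod :: "real poly \<Rightarrow> real poly \<Rightarrow> real \<Rightarrow> real" where
  "max_root_mod m dp lam = Max (norm ` root_set m dp lam)"

definition worst_root_mod :: "real \<Rightarrow> real \<Rightarrow> real poly \<Rightarrow> real poly \<Rightarrow> real" where
  "worst_root_mod mu L m dp = (SUP lam\<in>{mu..L}. max_root_mod m dp lam)"

end

theory Submission
  imports Defs "HOL-Analysis.Topology_Euclidean_Space" "Jordan_Normal_Form.Spectral_Radius"
begin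

text \<open>For \<open>C(z) = (d(z)/m(z)) I\<close> the matrix \<open>m(z) I - d(z) A\<close> is singular exactly when
  \<open>m(z) = \<lambda> d(z)\<close> for an eigenvalue \<open>\<lambda>\<close> of \<open>A\<close>, so the closed-loop poles are the roots
  of the polynomials \<open>m - \<lambda> d\<close>. The scalar matrices \<open>\<lambda> I\<close> realise every \<open>\<lambda> \<in> [\<mu>, L]\<close>,
  so the worst case over \<open>A\<close> is the supremum over \<open>\<lambda>\<close> of the largest root modulus; it is
  attained because, by Cauchy's root bound, the pairs \<open>(\<lambda>, z)\<close> with \<open>m(z) = \<lambda> d(z)\<close> form a
  compact set. An optimal \<open>d\<close> exists because this worst-case modulus is lower semicontinuous in
  the coefficients of \<open>d\<close> (roots of monic polynomials move continuously) and has bounded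
  sublevel sets: as \<open>\<mu> > 0\<close>, the coefficients of \<open>d\<close> are controlled by those of the monic
  polynomial \<open>m - \<mu> d\<close>, hence by its roots.\<close>

lemma monic_poly_factorization:
  fixes q :: "complex poly"
  assumes "lead_coeff q = 1"
  obtains as where "q = (\<Prod>a\<leftarrow>as. [:- a, 1:])" "length as = degree q"
  using fundamental_theorem_algebra_factorized[of q] assms by auto

lemma poly_prod_linear_factors: "poly (\<Prod>a\<leftarrow>as. [:- a, 1:]) x = (\<Prod>a\<leftarrow>as. x - a)"
  for x :: "'a::comm_ring_1"
  by (induction as) (auto simp: algebra_simps)

lemma prod_list_ge_power:
  fixes f :: "'a \<Rightarrow> real"
  assumes "0 \<le> c" "\<And>x. x \<in> set xs \<Longrightarrow> c \<le> f x"
  shows "c ^ length xs \<le> (\<Prod>x\<leftarrow>xs. f x)"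
  using assms
proof (induction xs)
  case (Cons x xs)
  then have "c ^ length xs \<le> (\<Prod>x\<leftarrow>xs. f x)" "c \<le> f x" by auto
  then show ?case using \<open>0 \<le> c\<close> by (simp add: mult_mono)
qed simp

lemma monic_poly_has_root_near:
  fixes q :: "complex poly"
  assumes "lead_coeff q = 1" "degree q \<ge> 1"
  obtains a where "poly q a = 0" "norm (z - a) ^ degree q \<le> norm (poly q z)"
proof -
  obtain as where q: "q = (\<Prod>a\<leftarrow>as. [:- a, 1:])" and len: "length as = degree q"
    using monic_poly_factorization[OF assms(1)] .
  have "as \<noteq> []" using len assms(2) by auto
  then obtain a where a: "a \<in> set as" "\<And>b. b \<in> set as \<Longrightarrow> norm (z - a) \<le> norm (z - b)"
    using arg_min_if_finite[of "set as" "\<lambda>b. norm (z - b)"]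
    by (metis List.finite_set set_empty arg_min_least)
  have "norm (poly q z) = (\<Prod>b\<leftarrow>as. norm (z - b))"
    unfolding q poly_prod_linear_factors by (induction as) (simp_all add: norm_mult)
  moreover have "norm (z - a) ^ degree q \<le> (\<Prod>b\<leftarrow>as. norm (z - b))"
    using prod_list_ge_power[of "norm (z - a)" as "\<lambda>b. norm (z - b)"] a(2) len by simp
  moreover have "poly q a = 0" using a(1) by (simp add: q poly_prod_linear_factors prod_list_zero_iff)
  ultimately show thesis using that by simp
qed

lemma norm_coeff_prod_linear_factors_le:
  fixes as :: "complex list"
  assumes "\<And>a. a \<in> set as \<Longrightarrow> norm a \<le> R" "0 \<le> R"
  shows "norm (coeff (\<Prod>a\<leftarrow>as. [:- a, 1:]) i) \<le> (1 + R) ^ length as"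
  using assms
proof (induction as arbitrary: i)
  case Nil
  then show ?case by (cases i) auto
next
  case (Cons a as)
  define Q where "Q = (\<Prod>a\<leftarrow>as. [:- a, 1:])"
  have IH: "norm (coeff Q j) \<le> (1 + R) ^ length as" for j
    using Cons unfolding Q_def by simp
  have "coeff (\<Prod>a\<leftarrow>a # as. [:- a, 1:]) i = - a * coeff Q i + coeff (pCons 0 Q) i"
    by (simp add: Q_def mult_pCons_left)
  also have "norm \<dots> \<le> norm a * norm (coeff Q i) + norm (coeff (pCons 0 Q) i)"
    by (metis norm_mult norm_minus_cancel norm_triangle_ineq)
  also have "\<dots> \<le> R * (1 + R) ^ length as + (1 + R) ^ length as"
  proof (rule add_mono)
    show "norm a * norm (coeff Q i) \<le> R * (1 + R) ^ length as"
      using Cons.prems IH[of i] by (intro mult_mono) auto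
    show "norm (coeff (pCons 0 Q) i) \<le> (1 + R) ^ length as"
      using IH Cons.prems(2) by (cases i) auto
  qed
  also have "\<dots> = (1 + R) ^ length (a # as)"
    by (simp add: algebra_simps)
  finally show ?case .
qed

lemma norm_coeff_monic_poly_le:
  fixes q :: "complex poly"
  assumes "lead_coeff q = 1" "0 \<le> R" "\<And>a. poly q a = 0 \<Longrightarrow> norm a \<le> R"
  shows "norm (coeff q i) \<le> (1 + R) ^ degree q"
proof -
  obtain as where q: "q = (\<Prod>a\<leftarrow>as. [:- a, 1:])" and len: "length as = degree q"
    using monic_poly_factorization[OF assms(1)] .
  have roots: "norm a \<le> R" if "a \<in> set as" for a
    using assms(3) that by (simp add: q poly_prod_linear_factors prod_list_zero_iff)
  show ?thesis
    using norm_coeff_prod_linear_factors_le[where as = as and i = i, OF roots assms(2)]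
    by (simp only: q[symmetric] len)
qed

lemma norm_root_le_Cauchy_bound:
  fixes q :: "complex poly"
  assumes "lead_coeff q = 1" "degree q \<ge> 1" "poly q z = 0"
  shows "norm z \<le> max 1 (\<Sum>i<degree q. norm (coeff q i))"
proof (cases "norm z \<le> 1")
  case False
  define n where "n = degree q"
  define S where "S = (\<Sum>i<n. norm (coeff q i))"
  have "0 = (\<Sum>i<Suc n. coeff q i * z ^ i)"
    using assms(3) unfolding poly_altdef n_def lessThan_Suc_atMost by simp
  also have "\<dots> = (\<Sum>i<n. coeff q i * z ^ i) + z ^ n"
    using assms(1) by (simp add: n_def)
  finally have "norm z ^ n = norm (\<Sum>i<n. coeff q i * z ^ i)"
    by (metis add_eq_0_iff norm_minus_cancel norm_power)
  also have "\<dots> \<le> (\<Sum>i<n. norm (coeff q i) * norm z ^ i)"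
    by (rule order_trans[OF norm_sum]) (simp add: norm_mult norm_power)
  also have "\<dots> \<le> (\<Sum>i<n. norm (coeff q i) * norm z ^ (n - 1))"
    using False by (intro sum_mono mult_left_mono power_increasing) auto
  also have "\<dots> = S * norm z ^ (n - 1)"
    unfolding S_def by (simp add: sum_distrib_right)
  finally have "norm z * norm z ^ (n - 1) \<le> S * norm z ^ (n - 1)"
    using assms(2) by (simp add: n_def power_Suc[symmetric])
  moreover have "0 < norm z ^ (n - 1)"
    using False by (intro zero_less_power) auto
  ultimately have "norm z \<le> S"
    by (simp add: mult_le_cancel_right)
  then show ?thesis unfolding S_def n_def by simp
qed simp

lemma poly_eq_sum_upto:
  fixes p :: "'a::{comm_semiring_0,semiring_1} poly"
  assumes "degree p \<le> n"
  shows "poly p z = (\<Sum>i\<le>n. coeff p i * z ^ i)"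
proof -
  have "(\<Sum>i\<le>n. coeff p i * z ^ i) = (\<Sum>i\<le>degree p. coeff p i * z ^ i)"
    by (rule sum.mono_neutral_right) (use assms in \<open>auto simp: coeff_eq_0\<close>)
  then show ?thesis by (simp add: poly_altdef)
qed

lemma tendsto_poly_coeffwise:
  fixes p :: "nat \<Rightarrow> 'a::real_normed_field poly"
  assumes "\<And>k. degree (p k) \<le> n" "degree q \<le> n"
    and "\<And>i. (\<lambda>k. coeff (p k) i) \<longlonglongrightarrow> coeff q i"
  shows "(\<lambda>k. poly (p k) z) \<longlonglongrightarrow> poly q z"
  unfolding poly_eq_sum_upto[OF assms(1)] poly_eq_sum_upto[OF assms(2)]
  by (intro tendsto_sum tendsto_mult_right assms(3))

lemma monic_poly_roots_tendsto:
  fixes q :: "nat \<Rightarrow> complex poly"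
  assumes "\<And>k. lead_coeff (q k) = 1" "\<And>k. degree (q k) = n" "n \<ge> 1"
    and "(\<lambda>k. poly (q k) z) \<longlonglongrightarrow> 0"
  obtains a where "\<And>k. poly (q k) (a k) = 0" "a \<longlonglongrightarrow> z"
proof -
  have "\<forall>k. \<exists>a. poly (q k) a = 0 \<and> norm (z - a) ^ n \<le> norm (poly (q k) z)"
  proof
    fix k
    show "\<exists>a. poly (q k) a = 0 \<and> norm (z - a) ^ n \<le> norm (poly (q k) z)"
      by (rule monic_poly_has_root_near[OF assms(1), of k z]) (use assms(2,3) in auto)
  qed
  from choice[OF this] obtain a where a: "\<And>k. poly (q k) (a k) = 0"
    and near: "\<And>k. norm (z - a k) ^ n \<le> norm (poly (q k) z)"
    by blast
  have bound: "norm (a k - z) \<le> root n (norm (poly (q k) z))" for k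
  proof -
    have "norm (a k - z) = root n (norm (z - a k) ^ n)"
      using assms(3) by (simp add: real_root_power_cancel norm_minus_commute[of z])
    also have "\<dots> \<le> root n (norm (poly (q k) z))"
      using near[of k] assms(3) by (simp add: real_root_le_mono)
    finally show ?thesis .
  qed
  have "(\<lambda>k. root n (norm (poly (q k) z))) \<longlonglongrightarrow> 0"
    using tendsto_real_root[OF tendsto_norm_zero[OF assms(4)], of n] by simp
  from Lim_null_comparison[OF always_eventually[OF allI[OF bound]] this]
  show thesis
    by (rule that[OF a LIM_zero_cancel])
qed

lemma bounded_coordinates_convergent_subseq:
  fixes c :: "nat \<Rightarrow> nat \<Rightarrow> real"
  assumes "\<And>k i. i < N \<Longrightarrow> \<bar>c k i\<bar> \<le> B i"
  obtains r l where "strict_mono r" "\<And>i. i < N \<Longrightarrow> (\<lambda>k. c (r k) i) \<longlonglongrightarrow> l i"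
proof -
  have "bounded ((\<lambda>x. x i) ` range c)" if "i \<in> {..<N}" for i
    using assms that by (intro boundedI[of _ "B i"]) auto
  from compact_lemma_general[where basis = "{..<N}" and proj = "\<lambda>x i. x i" and unproj = id,
      OF _ this]
  obtain l r where r: "strict_mono r"
    and close: "\<forall>e>0. eventually (\<lambda>k. \<forall>i\<in>{..<N}. dist (c (r k) i) (l i) < e) sequentially"
    by auto
  have "(\<lambda>k. c (r k) i) \<longlonglongrightarrow> l i" if "i < N" for i
    unfolding tendsto_iff using close that by (auto elim!: eventually_mono)
  with r show thesis using that by blast
qed

lemma coeff_cpoly [simp]: "coeff (cpoly p) i = complex_of_real (coeff p i)"
  by (simp add: cpoly_def coeff_map_poly)

lemma degree_cpoly [simp]: "degree (cpoly p) = degree p"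
  unfolding cpoly_def by (rule degree_map_poly) simp

lemma poly_cpoly_diff_smult:
  "poly (cpoly (m - Polynomial.smult lam dp)) z = poly (cpoly m) z - of_real lam * poly (cpoly dp) z"
proof -
  have "cpoly (m - Polynomial.smult lam dp) = cpoly m - Polynomial.smult (of_real lam) (cpoly dp)"
    by (rule poly_eqI) simp
  then show ?thesis by simp
qed

lemma monic_cpoly_diff_smult:
  assumes "lead_coeff m = 1" "degree dp < degree m"
  shows "degree (cpoly (m - Polynomial.smult lam dp)) = degree m"
    and "lead_coeff (cpoly (m - Polynomial.smult lam dp)) = 1"
proof -
  have small: "degree (Polynomial.smult lam dp) < degree m"
    using assms(2) degree_smult_le le_less_trans by blast
  then have "degree (m - Polynomial.smult lam dp) = degree m"
    by (metis degree_add_eq_left degree_minus diff_conv_add_uminus)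
  then show deg: "degree (cpoly (m - Polynomial.smult lam dp)) = degree m"
    by simp
  have "coeff (Polynomial.smult lam dp) (degree m) = 0"
    using small coeff_eq_0 by blast
  then show "lead_coeff (cpoly (m - Polynomial.smult lam dp)) = 1"
    unfolding deg using assms(1) by simp
qed

lemma poly_closed_loop_charpoly:
  assumes "A \<in> carrier_mat n n"
  shows "poly (closed_loop_charpoly m dp A) z =
    det (poly (cpoly m) z \<cdot>\<^sub>m 1\<^sub>m n - poly (cpoly dp) z \<cdot>\<^sub>m map_mat complex_of_real A)"
  unfolding closed_loop_charpoly_def using assms
  by (intro poly_det_cong[of _ n]) (auto simp: mult.commute)

lemma det_scalar_minus_smult_eq_0_iff:
  fixes B :: "complex mat"
  assumes B: "B \<in> carrier_mat n n" and "0 < n"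
  shows "det (a \<cdot>\<^sub>m 1\<^sub>m n - b \<cdot>\<^sub>m B) = 0 \<longleftrightarrow> (\<exists>k. eigenvalue B k \<and> a = k * b)"
proof (cases "b = 0")
  case True
  have "a \<cdot>\<^sub>m 1\<^sub>m n - b \<cdot>\<^sub>m B = a \<cdot>\<^sub>m 1\<^sub>m n"
    using True B by (intro eq_matI) auto
  moreover obtain k where "eigenvalue B k"
    using spectrum_non_empty[OF assms] unfolding spectrum_def by auto
  ultimately show ?thesis using True \<open>0 < n\<close> by auto
next
  case False
  have "a \<cdot>\<^sub>m 1\<^sub>m n - b \<cdot>\<^sub>m B = (- b) \<cdot>\<^sub>m char_matrix B (a / b)"
    using False B by (intro eq_matI) (auto simp: char_matrix_def field_simps)
  then have "det (a \<cdot>\<^sub>m 1\<^sub>m n - b \<cdot>\<^sub>m B) = 0 \<longleftrightarrow> eigenvalue B (a / b)"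
    using False B by (simp add: eigenvalue_det[OF B])
  also have "\<dots> \<longleftrightarrow> (\<exists>k. eigenvalue B k \<and> a = k * b)"
    using False by (auto simp: field_simps)
  finally show ?thesis .
qed

lemma closed_loop_poles_eq_Union_root_set:
  assumes A: "A \<in> carrier_mat n n" and "0 < n"
    and real_eigenvalues: "\<And>k. eigenvalue (map_mat complex_of_real A) k \<Longrightarrow> k \<in> \<real>"
  shows "closed_loop_poles m dp A =
    (\<Union>lam\<in>{lam. eigenvalue (map_mat complex_of_real A) (complex_of_real lam)}. root_set m dp lam)"
proof -
  define Ac where "Ac = map_mat complex_of_real A"
  have Ac: "Ac \<in> carrier_mat n n" using A by (simp add: Ac_def)
  have "z \<in> closed_loop_poles m dp A \<longleftrightarrow>
      (\<exists>k. eigenvalue Ac k \<and> poly (cpoly m) z = k * poly (cpoly dp) z)" for z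
    unfolding closed_loop_poles_def mem_Collect_eq poly_closed_loop_charpoly[OF A] Ac_def[symmetric]
    by (rule det_scalar_minus_smult_eq_0_iff[OF Ac \<open>0 < n\<close>])
  also have "\<dots> z \<longleftrightarrow> (\<exists>lam. eigenvalue Ac (of_real lam) \<and> z \<in> root_set m dp lam)" for z
    using real_eigenvalues unfolding Ac_def[symmetric] root_set_def poly_cpoly_diff_smult
    by (auto elim!: Reals_cases)
  finally show ?thesis
    unfolding Ac_def by blast
qed

lemma eigenvalue_scalar_one_mat:
  "eigenvalue (c \<cdot>\<^sub>m 1\<^sub>m n) k \<longleftrightarrow> 0 < n \<and> k = (c :: 'a :: field)"
proof -
  have "char_matrix (c \<cdot>\<^sub>m 1\<^sub>m n) k = (c - k) \<cdot>\<^sub>m 1\<^sub>m n"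
    by (intro eq_matI) (auto simp: char_matrix_def)
  then have "det (char_matrix (c \<cdot>\<^sub>m 1\<^sub>m n) k) = (c - k) ^ n"
    by simp
  then show ?thesis
    unfolding eigenvalue_det[of _ n, OF smult_carrier_mat[OF one_carrier_mat]] by auto
qed

lemma map_mat_scalar_one_mat: "map_mat complex_of_real (lam \<cdot>\<^sub>m 1\<^sub>m n) = of_real lam \<cdot>\<^sub>m 1\<^sub>m n"
  by (intro eq_matI) auto

lemma sym_spec_scalar_one_mat:
  assumes "lam \<in> {mu..L}"
  shows "sym_spec n mu L (lam \<cdot>\<^sub>m 1\<^sub>m n)"
proof -
  have "transpose_mat (lam \<cdot>\<^sub>m 1\<^sub>m n) = lam \<cdot>\<^sub>m 1\<^sub>m n"
    by (intro eq_matI) auto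
  then show ?thesis
    using assms unfolding sym_spec_def map_mat_scalar_one_mat eigenvalue_scalar_one_mat by auto
qed

lemma closed_loop_poles_scalar_one_mat:
  assumes "0 < n"
  shows "closed_loop_poles m dp (lam \<cdot>\<^sub>m 1\<^sub>m n) = root_set m dp lam"
  using assms
  by (subst closed_loop_poles_eq_Union_root_set[of _ n])
    (auto simp: map_mat_scalar_one_mat eigenvalue_scalar_one_mat)

context
  fixes m :: "real poly"
  assumes monic: "lead_coeff m = 1" and deg_m: "degree m \<ge> 1"
begin

context
  fixes dp :: "real poly"
  assumes deg_dp: "degree dp < degree m"
begin

lemma finite_root_set: "finite (root_set m dp lam)"
proof -
  have "cpoly (m - Polynomial.smult lam dp) \<noteq> 0"
    using monic_cpoly_diff_smult(2)[OF monic deg_dp, of lam] by (metis coeff_0 zero_neq_one)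
  then show ?thesis
    unfolding root_set_def by (rule poly_roots_finite)
qed

lemma root_set_nonempty: "root_set m dp lam \<noteq> {}"
proof -
  have "\<not> constant (poly (cpoly (m - Polynomial.smult lam dp)))"
    using monic_cpoly_diff_smult[OF monic deg_dp] deg_m by (simp add: constant_degree)
  from fundamental_theorem_of_algebra[OF this] show ?thesis
    unfolding root_set_def by auto
qed

lemma max_root_mod_in: "max_root_mod m dp lam \<in> norm ` root_set m dp lam"
  unfolding max_root_mod_def using finite_root_set root_set_nonempty by (intro Max_in) auto

lemma norm_le_max_root_mod: "z \<in> root_set m dp lam \<Longrightarrow> norm z \<le> max_root_mod m dp lam"
  unfolding max_root_mod_def using finite_root_set by (intro Max_ge) auto

lemma max_root_mod_nonneg: "0 \<le> max_root_mod m dp lam"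
  using max_root_mod_in[of lam] by auto

lemma norm_root_set_le:
  assumes "\<bar>lam\<bar> \<le> \<Lambda>" "z \<in> root_set m dp lam"
  shows "norm z \<le> max 1 (\<Sum>i<degree m. \<bar>coeff m i\<bar> + \<Lambda> * \<bar>coeff dp i\<bar>)"
proof -
  let ?q = "cpoly (m - Polynomial.smult lam dp)"
  note q = monic_cpoly_diff_smult[OF monic deg_dp, of lam]
  have "norm z \<le> max 1 (\<Sum>i<degree ?q. norm (coeff ?q i))"
    using assms(2) q deg_m unfolding root_set_def by (intro norm_root_le_Cauchy_bound) auto
  also have "(\<Sum>i<degree ?q. norm (coeff ?q i)) \<le> (\<Sum>i<degree m. \<bar>coeff m i\<bar> + \<Lambda> * \<bar>coeff dp i\<bar>)"
    unfolding q(1)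
  proof (rule sum_mono)
    fix i
    have "norm (coeff ?q i) = \<bar>coeff m i - lam * coeff dp i\<bar>"
      by (metis coeff_cpoly coeff_diff coeff_smult norm_of_real)
    also have "\<dots> \<le> \<bar>coeff m i\<bar> + \<bar>lam\<bar> * \<bar>coeff dp i\<bar>"
      using abs_triangle_ineq4[of "coeff m i" "lam * coeff dp i"] by (simp add: abs_mult)
    also have "\<dots> \<le> \<bar>coeff m i\<bar> + \<Lambda> * \<bar>coeff dp i\<bar>"
      using assms(1) by (simp add: mult_right_mono)
    finally show "norm (coeff ?q i) \<le> \<bar>coeff m i\<bar> + \<Lambda> * \<bar>coeff dp i\<bar>" .
  qed
  finally show ?thesis by simp
qed

lemma max_root_mod_attains_max:
  assumes "mu \<le> L"
  obtains lam where "lam \<in> {mu..L}"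
    "\<And>l. l \<in> {mu..L} \<Longrightarrow> max_root_mod m dp l \<le> max_root_mod m dp lam"
proof -
  define \<Lambda> where "\<Lambda> = max \<bar>mu\<bar> \<bar>L\<bar>"
  define R where "R = max 1 (\<Sum>i<degree m. \<bar>coeff m i\<bar> + \<Lambda> * \<bar>coeff dp i\<bar>)"
  define K where "K = {(l, z). l \<in> {mu..L} \<and> poly (cpoly m) z - of_real l * poly (cpoly dp) z = 0}"
  have K_iff: "(l, z) \<in> K \<longleftrightarrow> l \<in> {mu..L} \<and> z \<in> root_set m dp l" for l z
    unfolding K_def root_set_def poly_cpoly_diff_smult by simp
  have "closed K"
    unfolding K_def case_prod_beta atLeastAtMost_iff
    by (intro closed_Collect_conj closed_Collect_le closed_Collect_eq continuous_intros)
  moreover have "K \<subseteq> {mu..L} \<times> cball 0 R"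
  proof safe
    fix l z assume "(l, z) \<in> K"
    then have "l \<in> {mu..L}" "z \<in> root_set m dp l" using K_iff by auto
    moreover have "\<bar>l\<bar> \<le> \<Lambda>" using \<open>l \<in> {mu..L}\<close> unfolding \<Lambda>_def by auto
    ultimately show "l \<in> {mu..L}" "z \<in> cball 0 R"
      using norm_root_set_le unfolding R_def by auto
  qed
  then have "bounded K"
    by (rule bounded_subset[rotated])
      (intro bounded_Times bounded_cball compact_imp_bounded compact_Icc)
  ultimately have "compact K" by (simp add: compact_eq_bounded_closed)
  obtain z0 where "z0 \<in> root_set m dp mu" using root_set_nonempty by blast
  then have "K \<noteq> {}" using K_iff[of mu z0] assms by auto
  moreover have "continuous_on K (\<lambda>p. norm (snd p))"
    by (intro continuous_intros)
  ultimately obtain p where p: "p \<in> K" "\<And>y. y \<in> K \<Longrightarrow> norm (snd y) \<le> norm (snd p)"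
    using continuous_attains_sup[OF \<open>compact K\<close>] by blast
  obtain lam w where lw: "p = (lam, w)" by (cases p)
  have lam: "lam \<in> {mu..L}" "w \<in> root_set m dp lam" using p(1) lw K_iff by auto
  show thesis
  proof (rule that[OF lam(1)])
    fix l assume l: "l \<in> {mu..L}"
    obtain w' where w': "w' \<in> root_set m dp l" "max_root_mod m dp l = norm w'"
      using max_root_mod_in[of l] by auto
    have "norm w' \<le> norm w" using p(2)[of "(l, w')"] K_iff l w' lw by auto
    also have "\<dots> \<le> max_root_mod m dp lam" by (rule norm_le_max_root_mod[OF lam(2)])
    finally show "max_root_mod m dp l \<le> max_root_mod m dp lam" using w' by simp
  qed
qed

lemma worst_root_mod_attained:
  assumes "mu \<le> L"
  obtains lam where "lam \<in> {mu..L}" "worst_root_mod mu L m dp = max_root_mod m dp lam"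
proof -
  obtain lam where "lam \<in> {mu..L}"
    "\<And>l. l \<in> {mu..L} \<Longrightarrow> max_root_mod m dp l \<le> max_root_mod m dp lam"
    using max_root_mod_attains_max[OF assms] by blast
  moreover from this have "worst_root_mod mu L m dp = max_root_mod m dp lam"
    unfolding worst_root_mod_def by (intro cSup_eq_maximum) auto
  ultimately show thesis using that by blast
qed

lemma max_root_mod_le_worst_root_mod:
  assumes "l \<in> {mu..L}"
  shows "max_root_mod m dp l \<le> worst_root_mod mu L m dp"
proof -
  have "mu \<le> L" using assms by simp
  then obtain lam where "\<And>l. l \<in> {mu..L} \<Longrightarrow> max_root_mod m dp l \<le> max_root_mod m dp lam"
    using max_root_mod_attains_max by metis
  then show ?thesis
    unfolding worst_root_mod_def using assms by (intro cSUP_upper bdd_aboveI2) auto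
qed

lemma worst_root_mod_nonneg: "mu \<le> L \<Longrightarrow> 0 \<le> worst_root_mod mu L m dp"
  using max_root_mod_nonneg max_root_mod_le_worst_root_mod[of mu mu L]
  by (meson atLeastAtMost_iff order_refl order_trans)

lemma norm_root_le_worst_root_mod:
  assumes "l \<in> {mu..L}" "z \<in> root_set m dp l"
  shows "norm z \<le> worst_root_mod mu L m dp"
  using norm_le_max_root_mod[OF assms(2)] max_root_mod_le_worst_root_mod[OF assms(1)] by simp

end

lemma coeff_bound_of_worst_root_mod_le:
  assumes "degree dp < degree m" "0 < mu" "mu \<le> L" "worst_root_mod mu L m dp \<le> R"
  shows "\<bar>coeff dp i\<bar> \<le> (\<bar>coeff m i\<bar> + (1 + R) ^ degree m) / mu"
proof -
  let ?q = "cpoly (m - Polynomial.smult mu dp)"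
  note q = monic_cpoly_diff_smult[OF monic assms(1), of mu]
  have mu: "mu \<in> {mu..L}" using assms(3) by simp
  have "0 \<le> R"
    using worst_root_mod_nonneg[OF assms(1,3)] assms(4) by linarith
  moreover have "norm a \<le> R" if "poly ?q a = 0" for a
    using order_trans[OF norm_root_le_worst_root_mod[OF assms(1) mu] assms(4)] that
    unfolding root_set_def by simp
  ultimately have "norm (coeff ?q i) \<le> (1 + R) ^ degree m"
    using norm_coeff_monic_poly_le[OF q(2)] q(1) by metis
  moreover have "norm (coeff ?q i) = \<bar>coeff m i - mu * coeff dp i\<bar>"
    by (metis coeff_cpoly coeff_diff coeff_smult norm_of_real)
  ultimately have "mu * \<bar>coeff dp i\<bar> \<le> \<bar>coeff m i\<bar> + (1 + R) ^ degree m"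
    using abs_triangle_ineq3[of "coeff m i" "mu * coeff dp i"] assms(2) by (simp add: abs_mult)
  then show ?thesis
    using assms(2) by (simp add: pos_le_divide_eq mult.commute)
qed

text \<open>Lower semicontinuity: every root of the limit polynomial is a limit of roots of the
  approximating ones.\<close>
lemma worst_root_mod_le_of_coeff_tendsto:
  assumes "mu \<le> L" "\<And>k. degree (p k) < degree m" "degree d < degree m"
    and "\<And>i. (\<lambda>k. coeff (p k) i) \<longlonglongrightarrow> coeff d i"
    and "\<And>k. worst_root_mod mu L m (p k) \<le> R k" "R \<longlonglongrightarrow> r"
  shows "worst_root_mod mu L m d \<le> r"
proof -
  obtain lam where lam: "lam \<in> {mu..L}" "worst_root_mod mu L m d = max_root_mod m d lam"
    using worst_root_mod_attained[OF assms(3,1)] by blast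
  obtain z where z: "z \<in> root_set m d lam" "max_root_mod m d lam = norm z"
    using max_root_mod_in[OF assms(3), of lam] by auto
  define q where "q k = cpoly (m - Polynomial.smult lam (p k))" for k
  have "(\<lambda>k. poly (cpoly (p k)) z) \<longlonglongrightarrow> poly (cpoly d) z"
    using assms(2-4) by (intro tendsto_poly_coeffwise[where n = "degree m"])
      (auto intro: tendsto_of_real less_imp_le)
  then have "(\<lambda>k. poly (q k) z) \<longlonglongrightarrow> poly (cpoly m) z - of_real lam * poly (cpoly d) z"
    unfolding q_def poly_cpoly_diff_smult by (intro tendsto_diff tendsto_const tendsto_mult_left)
  moreover have "poly (cpoly m) z - of_real lam * poly (cpoly d) z = 0"
    using z(1) unfolding root_set_def poly_cpoly_diff_smult by simp
  ultimately have lim: "(\<lambda>k. poly (q k) z) \<longlonglongrightarrow> 0" by simp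
  have "lead_coeff (q k) = 1" "degree (q k) = degree m" for k
    unfolding q_def using monic_cpoly_diff_smult[OF monic assms(2)] by auto
  then obtain a where a: "\<And>k. poly (q k) (a k) = 0" "a \<longlonglongrightarrow> z"
    using monic_poly_roots_tendsto[OF _ _ deg_m lim] by metis
  have "norm (a k) \<le> R k" for k
    using order_trans[OF norm_root_le_worst_root_mod[OF assms(2) lam(1)] assms(5)] a(1)
    unfolding q_def root_set_def by simp
  then have "norm z \<le> r"
    using LIMSEQ_le[OF tendsto_norm[OF a(2)] assms(6)] by blast
  then show ?thesis using lam(2) z(2) by simp
qed

lemma worst_root_mod_has_minimizer:
  assumes "0 < mu" "mu \<le> L"
  obtains d where "degree d < degree m"
    "\<And>dp. degree dp < degree m \<Longrightarrow> worst_root_mod mu L m d \<le> worst_root_mod mu L m dp"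
proof -
  define n where "n = degree m"
  define D where "D = {dp :: real poly. degree dp < n}"
  define W where "W = worst_root_mod mu L m"
  define r where "r = (INF dp\<in>D. W dp)"
  have W_nonneg: "0 \<le> W dp" if "dp \<in> D" for dp
    using that worst_root_mod_nonneg assms(2) unfolding D_def W_def n_def by blast
  have "0 \<in> D" using deg_m unfolding D_def n_def by auto
  have r_le: "r \<le> W dp" if "dp \<in> D" for dp
    unfolding r_def using that W_nonneg by (intro cINF_lower bdd_belowI2) auto
  have "\<forall>k. \<exists>dp. dp \<in> D \<and> W dp < r + inverse (real (Suc k))"
  proof
    fix k
    have "r < r + inverse (real (Suc k))" by simp
    then show "\<exists>dp. dp \<in> D \<and> W dp < r + inverse (real (Suc k))"
      using cInf_lessD[of "W ` D"] \<open>0 \<in> D\<close> unfolding r_def by blast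
  qed
  from choice[OF this] obtain p
    where p: "\<And>k. p k \<in> D" "\<And>k. W (p k) < r + inverse (real (Suc k))"
    by blast
  have "W (p k) \<le> r + 1" for k
    using p(2)[of k] inverse_le_1_iff[of "real (Suc k)"] by simp
  then have coeff_bounded: "\<bar>coeff (p k) i\<bar> \<le> (\<bar>coeff m i\<bar> + (2 + r) ^ n) / mu" for k i
    using coeff_bound_of_worst_root_mod_le[OF _ assms, of "p k" "r + 1"] p(1)
    unfolding D_def W_def n_def by (simp add: add.commute add.left_commute)
  obtain s e where s: "strict_mono s"
    and e: "\<And>i. i < n \<Longrightarrow> (\<lambda>k. coeff (p (s k)) i) \<longlonglongrightarrow> e i"
    using bounded_coordinates_convergent_subseq[where c = "\<lambda>k i. coeff (p k) i", OF coeff_bounded]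
    by blast
  define d where "d = (\<Sum>i<n. monom (e i) i)"
  have coeff_d: "coeff d j = (if j < n then e j else 0)" for j
    unfolding d_def by (simp add: coeff_sum coeff_monom)
  have deg_d: "degree d < degree m"
    using deg_m coeff_d unfolding n_def by (intro degree_lessI) auto
  have coeff_lim: "(\<lambda>k. coeff (p (s k)) j) \<longlonglongrightarrow> coeff d j" for j
  proof (cases "j < n")
    case False
    then have "coeff (p (s k)) j = 0" for k
      using p(1)[of "s k"] unfolding D_def by (intro coeff_eq_0) auto
    then show ?thesis using False coeff_d by simp
  qed (use e coeff_d in simp)
  have bound_lim: "(\<lambda>k. r + inverse (real (Suc (s k)))) \<longlonglongrightarrow> r"
    using LIMSEQ_subseq_LIMSEQ[OF tendsto_add[OF tendsto_const LIMSEQ_inverse_real_of_nat] s]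
    by (simp add: o_def)
  have "W d \<le> r"
    unfolding W_def
  proof (rule worst_root_mod_le_of_coeff_tendsto[OF assms(2) _ deg_d coeff_lim _ bound_lim])
    show "degree (p (s k)) < degree m" for k
      using p(1) unfolding D_def n_def by simp
    show "worst_root_mod mu L m (p (s k)) \<le> r + inverse (real (Suc (s k)))" for k
      using p(2)[of "s k"] unfolding W_def by simp
  qed
  show thesis
  proof (rule that[OF deg_d])
    fix dp :: "real poly"
    assume "degree dp < degree m"
    then have "r \<le> W dp" using r_le unfolding D_def n_def by simp
    with \<open>W d \<le> r\<close> show "worst_root_mod mu L m d \<le> worst_root_mod mu L m dp"
      unfolding W_def by simp
  qed
qed

lemma alg_rate_le_worst_root_mod:
  assumes deg_dp: "degree dp < degree m" and "mu \<le> L" and A: "sym_spec n mu L A" and "0 < n"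
  shows "alg_rate m dp A \<le> worst_root_mod mu L m dp"
proof -
  define Ac where "Ac = map_mat complex_of_real A"
  define \<Lambda> where "\<Lambda> = {lam. eigenvalue Ac (complex_of_real lam)}"
  have carrier: "Ac \<in> carrier_mat n n"
    and spec: "\<And>k. eigenvalue Ac k \<Longrightarrow> k \<in> complex_of_real ` {mu..L}"
    using A unfolding sym_spec_def Ac_def by auto
  have poles: "closed_loop_poles m dp A = (\<Union>lam\<in>\<Lambda>. root_set m dp lam)"
    unfolding \<Lambda>_def Ac_def
    using A \<open>0 < n\<close> by (intro closed_loop_poles_eq_Union_root_set) (auto simp: sym_spec_def)
  have \<Lambda>_range: "\<Lambda> \<subseteq> {mu..L}"
  proof
    fix lam
    assume "lam \<in> \<Lambda>"
    then obtain l where "l \<in> {mu..L}" "complex_of_real lam = complex_of_real l"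
      using spec unfolding \<Lambda>_def by blast
    then show "lam \<in> {mu..L}" by simp
  qed
  have "complex_of_real ` \<Lambda> \<subseteq> spectrum Ac"
    unfolding \<Lambda>_def spectrum_def by auto
  then have "finite (complex_of_real ` \<Lambda>)"
    using card_finite_spectrum(1)[OF carrier] finite_subset by blast
  then have "finite \<Lambda>"
    by (rule finite_imageD) (auto simp: inj_on_def)
  moreover obtain k where "eigenvalue Ac k"
    using spectrum_non_empty[OF carrier \<open>0 < n\<close>] unfolding spectrum_def by auto
  then have "\<Lambda> \<noteq> {}"
    using spec unfolding \<Lambda>_def by auto
  ultimately have "finite (closed_loop_poles m dp A)" "closed_loop_poles m dp A \<noteq> {}"
    unfolding poles using finite_root_set[OF deg_dp] root_set_nonempty[OF deg_dp] by auto
  moreover have "norm z \<le> worst_root_mod mu L m dp" if "z \<in> closed_loop_poles m dp A" for z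
    using that \<Lambda>_range norm_root_le_worst_root_mod[OF deg_dp] unfolding poles by blast
  ultimately show ?thesis
    unfolding alg_rate_def by (intro Max.boundedI) auto
qed

lemma worst_rate_eq_worst_root_mod:
  assumes "degree dp < degree m" "mu \<le> L" "0 < n"
  shows "worst_rate n mu L m dp = worst_root_mod mu L m dp"
  unfolding worst_rate_def
proof (rule cSup_eq_maximum)
  obtain lam where lam: "lam \<in> {mu..L}" "worst_root_mod mu L m dp = max_root_mod m dp lam"
    using worst_root_mod_attained[OF assms(1,2)] by blast
  then have "alg_rate m dp (lam \<cdot>\<^sub>m 1\<^sub>m n) = worst_root_mod mu L m dp"
    unfolding alg_rate_def max_root_mod_def closed_loop_poles_scalar_one_mat[OF assms(3)] by simp
  with sym_spec_scalar_one_mat[OF lam(1)]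
  show "worst_root_mod mu L m dp \<in> alg_rate m dp ` {A. sym_spec n mu L A}"
    by (metis image_eqI mem_Collect_eq)
  show "x \<le> worst_root_mod mu L m dp" if "x \<in> alg_rate m dp ` {A. sym_spec n mu L A}" for x
    using that alg_rate_le_worst_root_mod[OF assms(1,2) _ assms(3)] by auto
qed

end

theorem lemma2:
  fixes mu L :: real and m :: "real poly" and ndim :: nat
  assumes "0 < mu" and "mu < L"
    and "lead_coeff m = 1" and "degree m \<ge> 1"
    and "\<forall>z. poly (cpoly m) z = 0 \<longrightarrow> norm z = 1"
    and "ndim \<ge> 1"
  shows "(\<forall>dp A. degree dp < degree m \<longrightarrow> sym_spec ndim mu L A \<longrightarrow>
            closed_loop_poles m dp A =
              (\<Union>lam\<in>{lam. eigenvalue (map_mat complex_of_real A) (complex_of_real lam)}.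
                 root_set m dp lam))
       \<and> (\<forall>dp. degree dp < degree m \<longrightarrow>
            (\<exists>lam\<in>{mu..L}. max_root_mod m dp lam = worst_root_mod mu L m dp))
       \<and> (\<exists>d0. degree d0 < degree m
            \<and> (\<forall>dp. degree dp < degree m \<longrightarrow> worst_root_mod mu L m d0 \<le> worst_root_mod mu L m dp)
            \<and> optimal_rate ndim mu L m = worst_root_mod mu L m d0)"
proof -
  have "mu \<le> L" "0 < ndim" using assms(2,6) by auto
  have poles: "closed_loop_poles m dp A =
      (\<Union>lam\<in>{lam. eigenvalue (map_mat complex_of_real A) (complex_of_real lam)}. root_set m dp lam)"
    if "sym_spec ndim mu L A" for dp A
    using that \<open>0 < ndim\<close> unfolding sym_spec_def
    by (intro closed_loop_poles_eq_Union_root_set[of _ ndim]) auto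
  have attained: "\<exists>lam\<in>{mu..L}. max_root_mod m dp lam = worst_root_mod mu L m dp"
    if "degree dp < degree m" for dp
    using worst_root_mod_attained[OF assms(3,4) that \<open>mu \<le> L\<close>] by metis
  obtain d0 where d0: "degree d0 < degree m"
    "\<And>dp. degree dp < degree m \<Longrightarrow> worst_root_mod mu L m d0 \<le> worst_root_mod mu L m dp"
    using worst_root_mod_has_minimizer[OF assms(3,4,1) \<open>mu \<le> L\<close>] by blast
  have "optimal_rate ndim mu L m = (INF dp\<in>{dp. degree dp < degree m}. worst_root_mod mu L m dp)"
    unfolding optimal_rate_def
    using worst_rate_eq_worst_root_mod[OF assms(3,4) _ \<open>mu \<le> L\<close> \<open>0 < ndim\<close>] by simp
  also have "\<dots> = worst_root_mod mu L m d0"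
    using d0 by (intro cInf_eq_minimum) auto
  finally show ?thesis
    using poles attained d0 by blast
qed

end
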